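(* Let $h\geq 2$. A subgroup $U\leq S_h\times\{id\}$ is an anonymity group with respect to $(h,n)$ for some $n\geq 2$ (here $\{id\}$ is the trivial subgroup of $S_n$), and every subgroup of $S_h\times\{id\}$ arises in this way. Consequently, the set of all anonymity groups (over all $h,n\geq 2$) is exactly $\{V\times\{id\}: V\ \text{a permutation group}\}$.
   Context: Permutations compose as $(\sigma\tau)(x)=\sigma(\tau(x))$. For integers $h,n\geq2$, let $G=S_h\times S_n$ and $\mathcal{P}=(S_n)^h$ (preference profiles), with $G$ acting by $(p^{(\varphi,\psi)})_i=\psi\,p_{\varphi^{-1}(i)}$. A social preference function (SPF) is any $F:\mathcal{P}\to S_n$; its symmetry group is $G(F)=\{(\varphi,\psi)\in G: F(p^{(\varphi,\psi)})=\psi F(p)\ \forall p\}$ and its anonymity group is $G_1(F)=G(F)\cap(S_h\times\{id\})$. A subgroup $U\leq S_h\times\{id\}$ is an anonymity group with respect to $(h,n)$ if $U=G_1(F)$ for some SPF $F$ on $\mathcal{P}=(S_n)^h$. *)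

theory Defs
  imports "HOL-Combinatorics.Permutations"
begin

definition Sym :: "nat \<Rightarrow> (nat \<Rightarrow> nat) set" where
  "Sym m = {\<sigma>. \<sigma> permutes {0..<m}}"

text \<open>Preference profiles (S_n)^h: voter i < h gets a permutation of {0..<n};
  values at indices >= h are fixed to id (canonical representative).\<close>

definition profiles :: "nat \<Rightarrow> nat \<Rightarrow> (nat \<Rightarrow> nat \<Rightarrow> nat) set" where
  "profiles h n = {p. (\<forall>i<h. p i \<in> Sym n) \<and> (\<forall>i. h \<le> i \<longrightarrow> p i = id)}"

definition act :: "nat \<Rightarrow> (nat \<Rightarrow> nat) \<Rightarrow> (nat \<Rightarrow> nat) \<Rightarrow> (nat \<Rightarrow> nat \<Rightarrow> nat) \<Rightarrow> (nat \<Rightarrow> nat \<Rightarrow> nat)" where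
  "act h \<phi> \<psi> p = (\<lambda>i. if i < h then \<psi> \<circ> p (inv \<phi> i) else id)"

text \<open>A social preference function: a map from profiles to S_n (values outside
  profiles are irrelevant).\<close>

definition is_SPF :: "nat \<Rightarrow> nat \<Rightarrow> ((nat \<Rightarrow> nat \<Rightarrow> nat) \<Rightarrow> (nat \<Rightarrow> nat)) \<Rightarrow> bool" where
  "is_SPF h n F \<longleftrightarrow> (\<forall>p\<in>profiles h n. F p \<in> Sym n)"

definition symmetry_group :: "nat \<Rightarrow> nat \<Rightarrow> ((nat \<Rightarrow> nat \<Rightarrow> nat) \<Rightarrow> (nat \<Rightarrow> nat))
    \<Rightarrow> ((nat \<Rightarrow> nat) \<times> (nat \<Rightarrow> nat)) set" where
  "symmetry_group h n F = {(\<phi>, \<psi>). \<phi> \<in> Sym h \<and> \<psi> \<in> Sym n \<and>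
      (\<forall>p\<in>profiles h n. F (act h \<phi> \<psi> p) = \<psi> \<circ> F p)}"

definition anonymity_group_of :: "nat \<Rightarrow> nat \<Rightarrow> ((nat \<Rightarrow> nat \<Rightarrow> nat) \<Rightarrow> (nat \<Rightarrow> nat))
    \<Rightarrow> ((nat \<Rightarrow> nat) \<times> (nat \<Rightarrow> nat)) set" where
  "anonymity_group_of h n F = symmetry_group h n F \<inter> (Sym h \<times> {id})"

definition is_anonymity_group :: "nat \<Rightarrow> nat \<Rightarrow> ((nat \<Rightarrow> nat) \<times> (nat \<Rightarrow> nat)) set \<Rightarrow> bool" where
  "is_anonymity_group h n U \<longleftrightarrow> (\<exists>F. is_SPF h n F \<and> U = anonymity_group_of h n F)"

definition perm_subgroup :: "nat \<Rightarrow> (nat \<Rightarrow> nat) set \<Rightarrow> bool" where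
  "perm_subgroup h V \<longleftrightarrow> V \<subseteq> Sym h \<and> id \<in> V \<and>
     (\<forall>a\<in>V. \<forall>b\<in>V. a \<circ> b \<in> V) \<and> (\<forall>a\<in>V. inv a \<in> V)"

end

theory Submission
  imports Defs
begin

text \<open>
  The anonymity group of any SPF is the stabiliser of F under the voter action, hence a subgroup.
  Conversely, take n = h and the profile p0 in which voter i ranks alternative i first, so that
  distinct voters submit distinct preferences and only the identity fixes p0. Let F return the
  identity on the V-orbit of p0 and a transposition elsewhere. A voter permutation fixes F iff it
  maps the orbit into itself, iff it sends p0 into V p0, iff it lies in V.
\<close>

lemma id_in_Sym: "id \<in> Sym h"
  unfolding Sym_def by (simp add: permutes_id)

lemma inv_in_Sym: "\<phi> \<in> Sym h \<Longrightarrow> inv \<phi> \<in> Sym h"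
  unfolding Sym_def by (simp add: permutes_inv)

lemma comp_in_Sym: "\<phi> \<in> Sym h \<Longrightarrow> \<psi> \<in> Sym h \<Longrightarrow> \<phi> \<circ> \<psi> \<in> Sym h"
  unfolding Sym_def by (simp add: permutes_compose)

lemma Sym_less: "\<phi> \<in> Sym h \<Longrightarrow> i < h \<Longrightarrow> \<phi> i < h"
  unfolding Sym_def using permutes_in_image[of \<phi> "{0..<h}" i] by simp

lemma act_apply: "i < h \<Longrightarrow> act h \<phi> \<psi> p i = \<psi> \<circ> p (inv \<phi> i)"
  unfolding act_def by simp

lemma act_in_profiles:
  assumes "\<phi> \<in> Sym h" "\<psi> \<in> Sym n" "p \<in> profiles h n"
  shows "act h \<phi> \<psi> p \<in> profiles h n"
proof -
  have "\<psi> \<circ> p (inv \<phi> i) \<in> Sym n" if "i < h" for i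
    using assms Sym_less[OF inv_in_Sym[OF assms(1)] that] comp_in_Sym
    unfolding profiles_def by blast
  then show ?thesis unfolding profiles_def act_def by auto
qed

lemma act_id_id: "p \<in> profiles h n \<Longrightarrow> act h id id p = p"
  unfolding act_def profiles_def by (auto intro!: ext)

lemma act_comp:
  assumes "\<phi> \<in> Sym h" "\<phi>' \<in> Sym h"
  shows "act h \<phi> id (act h \<phi>' id p) = act h (\<phi> \<circ> \<phi>') id p"
proof -
  have "inv (\<phi> \<circ> \<phi>') = inv \<phi>' \<circ> inv \<phi>"
    using assms unfolding Sym_def by (simp add: o_inv_distrib permutes_bij)
  then show ?thesis
    unfolding act_def using Sym_less[OF inv_in_Sym[OF assms(1)]] by (auto intro!: ext)
qed

lemma act_inv_act:
  assumes "\<phi> \<in> Sym h" "p \<in> profiles h n"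
  shows "act h (inv \<phi>) id (act h \<phi> id p) = p"
  using assms act_comp[OF inv_in_Sym[OF assms(1)] assms(1)] act_id_id
  unfolding Sym_def by (simp add: permutes_inv_o)

definition anonymity_perms ::
    "nat \<Rightarrow> nat \<Rightarrow> ((nat \<Rightarrow> nat \<Rightarrow> nat) \<Rightarrow> (nat \<Rightarrow> nat)) \<Rightarrow> (nat \<Rightarrow> nat) set" where
  "anonymity_perms h n F = {\<phi> \<in> Sym h. \<forall>p\<in>profiles h n. F (act h \<phi> id p) = F p}"

lemma anonymity_group_of_eq: "anonymity_group_of h n F = anonymity_perms h n F \<times> {id}"
  unfolding anonymity_group_of_def symmetry_group_def anonymity_perms_def
  using id_in_Sym by auto

lemma perm_subgroup_anonymity_perms: "perm_subgroup h (anonymity_perms h n F)"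
  unfolding perm_subgroup_def
proof (intro conjI ballI)
  show "anonymity_perms h n F \<subseteq> Sym h"
    unfolding anonymity_perms_def by auto
  show "id \<in> anonymity_perms h n F"
    unfolding anonymity_perms_def using id_in_Sym act_id_id by auto
next
  fix a b assume a: "a \<in> anonymity_perms h n F" and b: "b \<in> anonymity_perms h n F"
  then have "a \<in> Sym h" "b \<in> Sym h" unfolding anonymity_perms_def by auto
  moreover have "F (act h (a \<circ> b) id p) = F p" if p: "p \<in> profiles h n" for p
    using a b p act_comp[OF \<open>a \<in> Sym h\<close> \<open>b \<in> Sym h\<close>, of p]
      act_in_profiles[OF \<open>b \<in> Sym h\<close> id_in_Sym p]
    unfolding anonymity_perms_def by auto
  ultimately show "a \<circ> b \<in> anonymity_perms h n F"
    unfolding anonymity_perms_def using comp_in_Sym by auto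
next
  fix a assume a: "a \<in> anonymity_perms h n F"
  then have aS: "a \<in> Sym h" unfolding anonymity_perms_def by auto
  have "F (act h (inv a) id p) = F p" if p: "p \<in> profiles h n" for p
  proof -
    have "act h (inv a) id p \<in> profiles h n"
      using act_in_profiles[OF inv_in_Sym[OF aS] id_in_Sym p] .
    with a have "F (act h (inv a) id p) = F (act h a id (act h (inv a) id p))"
      unfolding anonymity_perms_def by auto
    also have "\<dots> = F p"
      using act_inv_act[OF inv_in_Sym[OF aS] p] aS unfolding Sym_def by (simp add: permutes_inv_inv)
    finally show ?thesis .
  qed
  then show "inv a \<in> anonymity_perms h n F"
    unfolding anonymity_perms_def using inv_in_Sym[OF aS] by auto
qed

lemma is_anonymity_group_imp_perm_subgroup:
  assumes "is_anonymity_group h n U"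
  shows "\<exists>V. perm_subgroup h V \<and> U = V \<times> {id}"
  using assms perm_subgroup_anonymity_perms anonymity_group_of_eq
  unfolding is_anonymity_group_def by blast

lemma distinct_profile_act_eq_imp_eq:
  assumes "inj_on p {0..<h}" "\<phi> \<in> Sym h" "\<psi> \<in> Sym h"
    and "act h \<phi> id p = act h \<psi> id p"
  shows "\<phi> = \<psi>"
proof -
  have "inv \<phi> i = inv \<psi> i" for i
  proof (cases "i < h")
    case True
    have "p (inv \<phi> i) = p (inv \<psi> i)"
      using act_apply[OF True, of \<phi> id p] act_apply[OF True, of \<psi> id p] assms(4) by simp
    moreover have "inv \<phi> i \<in> {0..<h}" "inv \<psi> i \<in> {0..<h}"
      using Sym_less[OF inv_in_Sym[OF assms(2)] True]
        Sym_less[OF inv_in_Sym[OF assms(3)] True] by auto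
    ultimately show ?thesis
      by (rule inj_onD[OF assms(1)])
  next
    case False
    then show ?thesis
      using inv_in_Sym[OF assms(2)] inv_in_Sym[OF assms(3)]
      unfolding Sym_def by (simp add: permutes_not_in)
  qed
  then have "inv \<phi> = inv \<psi>" by blast
  then have "inv (inv \<phi>) = inv (inv \<psi>)" by (rule arg_cong)
  then show ?thesis
    using assms(2,3) unfolding Sym_def by (simp add: permutes_inv_inv)
qed

lemma exists_distinct_profile:
  assumes "h \<le> n"
  shows "\<exists>p\<in>profiles h n. inj_on p {0..<h}"
proof
  define p :: "nat \<Rightarrow> nat \<Rightarrow> nat" where
    "p = (\<lambda>i. if i < h then Transposition.transpose 0 i else id)"
  have "p i 0 = i" if "i < h" for i
    using that unfolding p_def by simp
  then show "inj_on p {0..<h}"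
    by (metis atLeastLessThan_iff inj_onI)
  have "Transposition.transpose 0 i \<in> Sym n" if "i < h" for i
    using assms that permutes_swap_id[of 0 "{0..<n}" i] unfolding Sym_def by simp
  then show "p \<in> profiles h n"
    unfolding profiles_def p_def by simp
qed

definition voter_orbit :: "nat \<Rightarrow> (nat \<Rightarrow> nat) set \<Rightarrow> (nat \<Rightarrow> nat \<Rightarrow> nat) \<Rightarrow> (nat \<Rightarrow> nat \<Rightarrow> nat) set"
  where "voter_orbit h V p = (\<lambda>\<phi>. act h \<phi> id p) ` V"

lemma act_in_voter_orbit_iff:
  assumes V: "perm_subgroup h V" and "\<phi> \<in> V" "p \<in> profiles h n"
  shows "act h \<phi> id p \<in> voter_orbit h V p0 \<longleftrightarrow> p \<in> voter_orbit h V p0"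
proof
  have VS: "V \<subseteq> Sym h" and closed: "\<And>a b. a \<in> V \<Longrightarrow> b \<in> V \<Longrightarrow> a \<circ> b \<in> V"
    and inv_closed: "\<And>a. a \<in> V \<Longrightarrow> inv a \<in> V"
    using V unfolding perm_subgroup_def by auto
  have \<phi>S: "\<phi> \<in> Sym h" using \<open>\<phi> \<in> V\<close> VS by auto
  show "p \<in> voter_orbit h V p0" if "act h \<phi> id p \<in> voter_orbit h V p0"
  proof -
    from that obtain \<psi> where "\<psi> \<in> V" and \<psi>: "act h \<phi> id p = act h \<psi> id p0"
      unfolding voter_orbit_def by auto
    have "p = act h (inv \<phi>) id (act h \<psi> id p0)"
      using act_inv_act[OF \<phi>S \<open>p \<in> profiles h n\<close>] \<psi> by simp
    also have "\<dots> = act h (inv \<phi> \<circ> \<psi>) id p0"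
      using act_comp[OF inv_in_Sym[OF \<phi>S]] \<open>\<psi> \<in> V\<close> VS by auto
    finally show ?thesis
      unfolding voter_orbit_def using closed inv_closed \<open>\<phi> \<in> V\<close> \<open>\<psi> \<in> V\<close> by blast
  qed
  show "act h \<phi> id p \<in> voter_orbit h V p0" if "p \<in> voter_orbit h V p0"
  proof -
    from that obtain \<psi> where "\<psi> \<in> V" and "p = act h \<psi> id p0"
      unfolding voter_orbit_def by auto
    then have "act h \<phi> id p = act h (\<phi> \<circ> \<psi>) id p0"
      using act_comp[OF \<phi>S] VS by auto
    then show ?thesis
      unfolding voter_orbit_def using closed \<open>\<phi> \<in> V\<close> \<open>\<psi> \<in> V\<close> by blast
  qed
qed

lemma anonymity_perms_orbit_indicator:
  assumes V: "perm_subgroup h V"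
    and p0: "p0 \<in> profiles h n" "inj_on p0 {0..<h}"
    and \<tau>: "\<tau> \<noteq> id"
  shows "anonymity_perms h n (\<lambda>p. if p \<in> voter_orbit h V p0 then id else \<tau>) = V"
    (is "anonymity_perms h n ?F = V")
proof
  have VS: "V \<subseteq> Sym h" and "id \<in> V"
    using V unfolding perm_subgroup_def by auto
  show "V \<subseteq> anonymity_perms h n ?F"
    unfolding anonymity_perms_def using VS act_in_voter_orbit_iff[OF V] by auto
  show "anonymity_perms h n ?F \<subseteq> V"
  proof
    fix \<phi> assume \<phi>: "\<phi> \<in> anonymity_perms h n ?F"
    then have \<phi>S: "\<phi> \<in> Sym h" unfolding anonymity_perms_def by auto
    have "p0 \<in> voter_orbit h V p0"
      unfolding voter_orbit_def using \<open>id \<in> V\<close> act_id_id[OF p0(1)] by force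
    then have "act h \<phi> id p0 \<in> voter_orbit h V p0"
      using \<phi> p0(1) \<tau> unfolding anonymity_perms_def by (auto split: if_splits)
    then obtain \<psi> where "\<psi> \<in> V" "act h \<phi> id p0 = act h \<psi> id p0"
      unfolding voter_orbit_def by auto
    then show "\<phi> \<in> V"
      using distinct_profile_act_eq_imp_eq[OF p0(2) \<phi>S] VS by auto
  qed
qed

lemma perm_subgroup_is_anonymity_group:
  assumes V: "perm_subgroup h V" and "2 \<le> n" "h \<le> n"
  shows "is_anonymity_group h n (V \<times> {id})"
proof -
  obtain p0 where p0: "p0 \<in> profiles h n" "inj_on p0 {0..<h}"
    using exists_distinct_profile[OF \<open>h \<le> n\<close>] by blast
  define \<tau> where "\<tau> = Transposition.transpose (0::nat) 1"
  have \<tau>_Sym: "\<tau> \<in> Sym n"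
    using \<open>2 \<le> n\<close> permutes_swap_id[of 0 "{0..<n}" 1] unfolding Sym_def \<tau>_def by simp
  have "\<tau> 0 = 1"
    unfolding \<tau>_def by simp
  then have "\<tau> \<noteq> id"
    by auto
  define F where "F = (\<lambda>p. if p \<in> voter_orbit h V p0 then id else \<tau>)"
  have "is_SPF h n F"
    unfolding is_SPF_def F_def using \<tau>_Sym id_in_Sym by auto
  moreover have "anonymity_group_of h n F = V \<times> {id}"
    unfolding anonymity_group_of_eq F_def
    using anonymity_perms_orbit_indicator[OF V p0 \<open>\<tau> \<noteq> id\<close>] by simp
  ultimately show ?thesis
    unfolding is_anonymity_group_def by blast
qed

theorem mainTheorem5:
  fixes h :: nat
  assumes "h \<ge> 2"
  shows "(\<forall>V. perm_subgroup h V \<longrightarrow>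
            (\<exists>n\<ge>2. is_anonymity_group h n (V \<times> {id})))
       \<and> (\<forall>U. (\<exists>n\<ge>2. is_anonymity_group h n U) \<longleftrightarrow>
            (\<exists>V. perm_subgroup h V \<and> U = V \<times> {id}))"
  using perm_subgroup_is_anonymity_group[OF _ assms order_refl] is_anonymity_group_imp_perm_subgroup assms
  by blast

end
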